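(* Let $0\le k\le\mu$ be integers. For $f\in L^2(\mathbb{CP}^1,d\iota)$ with $R_\mu^*(f)\ge0$ (positive semidefinite) and every $z\in\mathbb{C}$, $$0\le E_{\mu,k}(f)(z)\le\mathrm{Tr}(R_\mu^*(f)).$$
   Context: $\mathcal{H}_\mu$ is the space of polynomials in one complex variable of degree $\le\mu$, with inner product $\langle f,g\rangle=\int_{\mathbb{C}}f\overline g\,d\iota_\mu$, $d\iota_\tau(z)=\frac{\tau+1}{(1+|z|^2)^\tau}\frac{dA(z)}{\pi(1+|z|^2)^2}$ ($dA$ Lebesgue measure); $d\iota:=d\iota_0$, the $SU(2)$-invariant probability measure on $\mathbb{CP}^1=\mathbb{C}\cup\{\infty\}$. For a function $f$, $R_\mu^*(f)$ is the operator on $\mathcal{H}_\mu$ given by $(R_\mu^*(f)h)(x)=\frac1{\mu+1}\int_{\mathbb{C}}f(z)h(z)(1+x\overline z)^\mu d\iota_\mu(z)$. The Berezin transform is $B_\tau(f)(z)=\int_{\mathbb{C}}\frac{|1+z\overline s|^{2\tau}}{(1+|z|^2)^\tau(1+|s|^2)^\tau}f(s)\,d\iota(s)$, and $E_{\mu,k}(f):=\binom{\mu}{k}\sum_{l=0}^k(-1)^{k-l}\binom{k}{l}B_{\mu-l}(f)$. *)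

theory Defs
  imports "HOL-Analysis.Analysis" "HOL-Library.Complex_Order"
    "HOL-Computational_Algebra.Polynomial"
begin

definition iota_dens :: "nat \<Rightarrow> complex \<Rightarrow> real" where
  "iota_dens tau z = (real tau + 1) / (1 + (cmod z)\<^sup>2) ^ tau / (pi * (1 + (cmod z)\<^sup>2)\<^sup>2)"

definition iota :: "nat \<Rightarrow> complex measure" where
  "iota tau = density lborel (\<lambda>z. ennreal (iota_dens tau z))"

definition Hmu :: "nat \<Rightarrow> (complex \<Rightarrow> complex) set" where
  "Hmu mu = {(\<lambda>x. poly p x) | p. degree p \<le> mu}"

definition inner_H :: "nat \<Rightarrow> (complex \<Rightarrow> complex) \<Rightarrow> (complex \<Rightarrow> complex) \<Rightarrow> complex" where
  "inner_H mu g h = integral\<^sup>L (iota mu) (\<lambda>z. g z * cnj (h z))"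

definition Rstar :: "nat \<Rightarrow> (complex \<Rightarrow> complex) \<Rightarrow> (complex \<Rightarrow> complex) \<Rightarrow> (complex \<Rightarrow> complex)" where
  "Rstar mu f h = (\<lambda>x. 1 / (of_nat mu + 1) *
      integral\<^sup>L (iota mu) (\<lambda>z. f z * h z * (1 + x * cnj z) ^ mu))"

text \<open>Positive semidefiniteness of an operator on H_mu (complex order: real and nonnegative).\<close>
definition psd_H :: "nat \<Rightarrow> ((complex \<Rightarrow> complex) \<Rightarrow> (complex \<Rightarrow> complex)) \<Rightarrow> bool" where
  "psd_H mu T \<longleftrightarrow> (\<forall>h \<in> Hmu mu. 0 \<le> inner_H mu (T h) h)"

definition as_poly :: "(complex \<Rightarrow> complex) \<Rightarrow> complex poly" where
  "as_poly g = (THE p. poly p = g)"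

definition trace_H :: "nat \<Rightarrow> ((complex \<Rightarrow> complex) \<Rightarrow> (complex \<Rightarrow> complex)) \<Rightarrow> complex" where
  "trace_H mu T = (\<Sum>j\<le>mu. coeff (as_poly (T (\<lambda>x. x ^ j))) j)"

definition berezin :: "nat \<Rightarrow> (complex \<Rightarrow> complex) \<Rightarrow> complex \<Rightarrow> complex" where
  "berezin tau f z = integral\<^sup>L (iota 0)
     (\<lambda>s. complex_of_real ((cmod (1 + z * cnj s)) ^ (2 * tau)
            / ((1 + (cmod z)\<^sup>2) ^ tau * (1 + (cmod s)\<^sup>2) ^ tau)) * f s)"

definition E_op :: "nat \<Rightarrow> nat \<Rightarrow> (complex \<Rightarrow> complex) \<Rightarrow> complex \<Rightarrow> complex" where
  "E_op mu k f z = of_nat (mu choose k) *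
     (\<Sum>l = 0..k. (-1) ^ (k - l) * of_nat (k choose l) * berezin (mu - l) f z)"

text \<open>f in L^2(CP^1, d iota) (the point at infinity is a null set).\<close>
definition L2_iota :: "(complex \<Rightarrow> complex) \<Rightarrow> bool" where
  "L2_iota f \<longleftrightarrow> f \<in> borel_measurable lborel \<and> integrable (iota 0) (\<lambda>z. (cmod (f z))\<^sup>2)"

end

theory Submission
  imports Defs "HOL-Real_Asymp.Real_Asymp"
begin

text \<open>Write \<open>p(z,s) = |s - z|\<^sup>2 / ((1 + |z|\<^sup>2)(1 + |s|\<^sup>2))\<close> for the squared chordal distance.
  The Berezin kernel is \<open>(1 - p)\<^sup>\<tau>\<close>, so the alternating sum defining \<open>E\<^sub>\<mu>\<^sub>,\<^sub>k(f)(z)\<close>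
  collapses to \<open>\<integral> f(s) b\<^sub>\<mu>\<^sub>,\<^sub>k(p(z,s)) d\<iota>(s)\<close> with the Bernstein polynomial \<open>b\<^sub>\<mu>\<^sub>,\<^sub>k\<close>.
  This weight is \<open>|g\<^sub>k(s)|\<^sup>2 / (1 + |s|\<^sup>2)\<^sup>\<mu>\<close> for the coherent polynomial
  \<open>g\<^sub>k \<sim> (s - z)\<^sup>k (1 + cnj z s)\<^sup>\<mu>\<^sup>-\<^sup>k\<close>, and by Fubini and the reproducing property of
  \<open>(1 + x cnj z)\<^sup>\<mu>\<close> in \<open>\<H>\<^sub>\<mu>\<close> we have \<open>\<langle>R\<^sub>\<mu>\<^sup>*(f) g, g\<rangle> = \<integral> f |g|\<^sup>2 / (1 + |s|\<^sup>2)\<^sup>\<mu> d\<iota>\<close>.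
  Hence \<open>E\<^sub>\<mu>\<^sub>,\<^sub>k(f)(z) = \<langle>R\<^sub>\<mu>\<^sup>*(f) g\<^sub>k, g\<^sub>k\<rangle> \<ge> 0\<close>. The Bernstein polynomials sum to one,
  so these values sum over \<open>k\<close> to \<open>\<integral> f d\<iota>\<close>, which is also the trace of \<open>R\<^sub>\<mu>\<^sup>*(f)\<close>:
  its diagonal entries in the monomial basis are the same integrals for \<open>z = 0\<close>.
  The reproducing property rests on the moments of \<open>\<iota>\<^sub>\<mu>\<close>: off the diagonal they vanish by
  rotation invariance of Lebesgue measure, on the diagonal they are Beta integrals.\<close>

section \<open>Polynomials, binomial sums and bounded multipliers\<close>

lemma of_nat_add_one_neq_zero: "(of_nat n + 1 :: 'a::semiring_char_0) \<noteq> 0"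
proof -
  have "(of_nat n + 1 :: 'a) = of_nat (Suc n)" by (simp add: add.commute)
  then show ?thesis by (simp only: of_nat_eq_0_iff)
qed

lemma poly_eq_sum_coeff:
  fixes q :: "'a::comm_semiring_1 poly"
  assumes "degree q \<le> mu"
  shows "poly q x = (\<Sum>l\<le>mu. coeff q l * x ^ l)"
proof -
  have "poly q x = poly (\<Sum>l\<le>mu. monom (coeff q l) l) x"
    by (simp only: poly_as_sum_of_monoms'[OF assms])
  then show ?thesis
    by (simp add: poly_sum poly_monom)
qed

lemma norm_poly_le_sum_coeff:
  fixes q :: "complex poly"
  assumes "degree q \<le> mu"
  shows "cmod (poly q y) \<le> (\<Sum>l\<le>mu. cmod (coeff q l)) * (1 + cmod y) ^ mu"
proof -
  have "cmod (poly q y) \<le> (\<Sum>l\<le>mu. cmod (coeff q l * y ^ l))"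
    unfolding poly_eq_sum_coeff[OF assms] by (rule norm_sum)
  also have "\<dots> \<le> (\<Sum>l\<le>mu. cmod (coeff q l) * (1 + cmod y) ^ mu)"
  proof (intro sum_mono)
    fix l assume "l \<in> {..mu}"
    then have "l \<le> mu" by simp
    have "cmod y ^ l \<le> (1 + cmod y) ^ l"
      by (intro power_mono) auto
    also have "\<dots> \<le> (1 + cmod y) ^ mu"
      using \<open>l \<le> mu\<close> by (intro power_increasing) auto
    finally have "cmod y ^ l \<le> (1 + cmod y) ^ mu" .
    then show "cmod (coeff q l * y ^ l) \<le> cmod (coeff q l) * (1 + cmod y) ^ mu"
      by (simp add: norm_mult norm_power mult_left_mono)
  qed
  finally show ?thesis
    by (simp add: sum_distrib_right)
qed

lemma borel_measurable_poly [measurable (raw)]: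
  fixes q :: "'a::{real_normed_field, second_countable_topology} poly"
  assumes "g \<in> borel_measurable M"
  shows "(\<lambda>x. poly q (g x)) \<in> borel_measurable M"
proof -
  have "poly q \<in> borel_measurable borel"
    by (intro borel_measurable_continuous_onI continuous_intros)
  then show ?thesis
    using assms by (rule measurable_compose[rotated])
qed

lemma one_plus_power_eq_sum:
  fixes w :: "'a::comm_semiring_1"
  shows "(1 + w) ^ mu = (\<Sum>i\<le>mu. of_nat (mu choose i) * w ^ i)"
  using binomial_ring[of w 1 mu] by (simp add: add.commute)

lemma alternating_binomial_sum_power:
  fixes x :: "'a::comm_ring_1"
  assumes "k \<le> mu"
  shows "(\<Sum>l\<le>k. (-1) ^ (k - l) * of_nat (k choose l) * x ^ (mu - l)) = (1 - x) ^ k * x ^ (mu - k)"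
proof -
  have summand: "(-1) ^ (k - l) * of_nat (k choose l) * x ^ (mu - l)
      = x ^ (mu - k) * (of_nat (k choose l) * 1 ^ l * (- x) ^ (k - l))" if "l \<in> {..k}" for l
  proof -
    have "mu - l = (mu - k) + (k - l)"
      using that assms by simp
    then have "x ^ (mu - l) = x ^ (mu - k) * x ^ (k - l)"
      by (simp only: power_add)
    moreover have "(- x) ^ (k - l) = (-1) ^ (k - l) * x ^ (k - l)"
      by (rule power_minus)
    ultimately show ?thesis
      by (simp add: mult_ac)
  qed
  have "(\<Sum>l\<le>k. (-1) ^ (k - l) * of_nat (k choose l) * x ^ (mu - l))
      = (\<Sum>l\<le>k. x ^ (mu - k) * (of_nat (k choose l) * 1 ^ l * (- x) ^ (k - l)))"
    by (rule sum.cong[OF refl summand])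
  also have "\<dots> = x ^ (mu - k) * (\<Sum>l\<le>k. of_nat (k choose l) * 1 ^ l * (- x) ^ (k - l))"
    by (rule sum_distrib_left[symmetric])
  also have "(\<Sum>l\<le>k. of_nat (k choose l) * 1 ^ l * (- x) ^ (k - l)) = (1 + - x) ^ k"
    by (rule binomial_ring[symmetric])
  finally show ?thesis
    by (simp add: mult.commute)
qed

lemma Bernstein_le_one:
  assumes "0 \<le> x" "x \<le> 1"
  shows "Bernstein n k x \<le> 1"
proof (cases "k \<le> n")
  case True
  then have "Bernstein n k x \<le> (\<Sum>j\<le>n. Bernstein n j x)"
    using assms by (intro member_le_sum Bernstein_nonneg) auto
  then show ?thesis by simp
qed (simp add: Bernstein_def binomial_eq_0)

lemma Bernstein_eq_alternating_sum:
  assumes "k \<le> mu"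
  shows "Bernstein mu k p
    = real (mu choose k) * (\<Sum>l\<le>k. (-1) ^ (k - l) * real (k choose l) * (1 - p) ^ (mu - l))"
  unfolding alternating_binomial_sum_power[OF assms] by (simp add: Bernstein_def)

lemma integrable_mult_bounded:
  fixes f b :: "'a \<Rightarrow> complex"
  assumes f: "integrable M f" and [measurable]: "b \<in> borel_measurable M"
    and bound: "\<And>s. cmod (b s) \<le> B"
  shows "integrable M (\<lambda>s. f s * b s)"
proof (rule Bochner_Integration.integrable_bound[where f = "\<lambda>s. B * cmod (f s)"])
  show "integrable M (\<lambda>s. B * cmod (f s))"
    using f by (auto intro!: integrable_norm)
  show "(\<lambda>s. f s * b s) \<in> borel_measurable M"
    using borel_measurable_integrable[OF f] by measurable
  have "0 \<le> B"
    using bound[of undefined] norm_ge_zero order_trans by blast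
  show "AE s in M. norm (f s * b s) \<le> norm (B * cmod (f s))"
  proof (rule AE_I2)
    fix s
    have "cmod (b s) * cmod (f s) \<le> B * cmod (f s)"
      using bound by (rule mult_right_mono) simp
    then show "norm (f s * b s) \<le> norm (B * cmod (f s))"
      using \<open>0 \<le> B\<close> by (simp add: norm_mult abs_mult mult.commute)
  qed
qed

lemma sum_integral_mult_Bernstein:
  fixes f :: "'a \<Rightarrow> complex"
  assumes f: "integrable M f" and [measurable]: "p \<in> borel_measurable M"
    and p: "\<And>s. 0 \<le> p s" "\<And>s. p s \<le> 1"
  shows "(\<Sum>j\<le>mu. integral\<^sup>L M (\<lambda>s. f s * Bernstein mu j (p s))) = integral\<^sup>L M f"
proof -
  have bound: "cmod (complex_of_real (Bernstein mu j (p s))) \<le> 1" for j s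
    using Bernstein_nonneg[OF p] Bernstein_le_one[OF p] by simp
  have [measurable]: "(\<lambda>s. complex_of_real (Bernstein mu j (p s))) \<in> borel_measurable M" for j
    unfolding Bernstein_def by measurable
  have "(\<Sum>j\<le>mu. integral\<^sup>L M (\<lambda>s. f s * Bernstein mu j (p s)))
      = integral\<^sup>L M (\<lambda>s. \<Sum>j\<le>mu. f s * Bernstein mu j (p s))"
    by (intro Bochner_Integration.integral_sum[symmetric] integrable_mult_bounded[OF f _ bound]) measurable
  also have "\<dots> = integral\<^sup>L M f"
    by (simp flip: sum_distrib_left of_real_sum)
  finally show ?thesis .
qed

section \<open>Lebesgue measure on the complex plane\<close>

lemma borel_measurable_Complex [measurable (raw)]:
  assumes "f \<in> borel_measurable M" "g \<in> borel_measurable M"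
  shows "(\<lambda>x. Complex (f x) (g x)) \<in> borel_measurable M"
proof -
  have "(\<lambda>x. complex_of_real (f x) + \<i> * complex_of_real (g x)) \<in> borel_measurable M"
    using assms by measurable
  then show ?thesis by (simp add: Complex_eq)
qed

lemma borel_measurable_cnj [measurable (raw)]:
  assumes "f \<in> borel_measurable M"
  shows "(\<lambda>x. cnj (f x)) \<in> borel_measurable M"
proof -
  have "(\<lambda>x. Complex (Re (f x)) (- Im (f x))) \<in> borel_measurable M"
    using assms by measurable
  moreover have "cnj z = Complex (Re z) (- Im z)" for z
    by (simp add: complex_eq_iff)
  ultimately show ?thesis by simp
qed

lemma distr_lborel_pair_Complex:
  "distr (lborel \<Otimes>\<^sub>M lborel) borel (\<lambda>p. Complex (fst p) (snd p)) = (lborel :: complex measure)"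
proof (rule lborel_eqI[symmetric])
  fix l u :: complex
  assume le: "\<And>b. b \<in> Basis \<Longrightarrow> l \<bullet> b \<le> u \<bullet> b"
  have le_Re: "Re l \<le> Re u" and le_Im: "Im l \<le> Im u"
    using le[of 1] le[of \<i>] by (simp_all add: inner_complex_def)
  have "(\<lambda>p. Complex (fst p) (snd p)) -` box l u \<inter> space (lborel \<Otimes>\<^sub>M lborel)
      = {Re l<..<Re u} \<times> {Im l<..<Im u}"
    by (auto simp: mem_box Basis_complex_def inner_complex_def space_pair_measure)
  then have "emeasure (distr (lborel \<Otimes>\<^sub>M lborel) borel (\<lambda>p. Complex (fst p) (snd p))) (box l u)
      = emeasure (lborel \<Otimes>\<^sub>M lborel) ({Re l<..<Re u} \<times> {Im l<..<Im u})"
    by (subst emeasure_distr) auto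
  also have "\<dots> = (\<Prod>b\<in>Basis. (u - l) \<bullet> b)"
    by (simp add: lborel.emeasure_pair_measure_Times Basis_complex_def inner_complex_def
        ennreal_mult le_Re le_Im)
  finally show "emeasure (distr (lborel \<Otimes>\<^sub>M lborel) borel (\<lambda>p. Complex (fst p) (snd p))) (box l u)
      = (\<Prod>b\<in>Basis. (u - l) \<bullet> b)" .
qed simp

lemma nn_integral_lborel_complex:
  fixes F :: "complex \<Rightarrow> ennreal"
  assumes [measurable]: "F \<in> borel_measurable borel"
  shows "(\<integral>\<^sup>+x. F x \<partial>lborel) = (\<integral>\<^sup>+a. \<integral>\<^sup>+b. F (Complex a b) \<partial>lborel \<partial>lborel)"
proof -
  have "(\<integral>\<^sup>+x. F x \<partial>lborel)
      = (\<integral>\<^sup>+x. F x \<partial>distr (lborel \<Otimes>\<^sub>M lborel) borel (\<lambda>p. Complex (fst p) (snd p)))"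
    by (simp add: distr_lborel_pair_Complex)
  also have "\<dots> = (\<integral>\<^sup>+p. F (Complex (fst p) (snd p)) \<partial>(lborel \<Otimes>\<^sub>M lborel))"
    by (subst nn_integral_distr) auto
  also have "\<dots> = (\<integral>\<^sup>+a. \<integral>\<^sup>+b. F (Complex a b) \<partial>lborel \<partial>lborel)"
    by (subst lborel.nn_integral_fst[symmetric]) auto
  finally show ?thesis .
qed

lemma nn_integral_lborel_complex':
  fixes F :: "complex \<Rightarrow> ennreal"
  assumes [measurable]: "F \<in> borel_measurable borel"
  shows "(\<integral>\<^sup>+x. F x \<partial>lborel) = (\<integral>\<^sup>+b. \<integral>\<^sup>+a. F (Complex a b) \<partial>lborel \<partial>lborel)"
  unfolding nn_integral_lborel_complex[OF assms]
  by (rule lborel_pair.Fubini'[symmetric]) auto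

lemma nn_integral_lborel_shift:
  fixes g :: "real \<Rightarrow> ennreal"
  assumes "g \<in> borel_measurable borel"
  shows "(\<integral>\<^sup>+a. g (a + t) \<partial>lborel) = (\<integral>\<^sup>+a. g a \<partial>lborel)"
  using nn_integral_real_affine[OF assms, of 1 t] by (simp add: add.commute)

lemma distr_eq_if_nn_integral_invariant:
  assumes T [measurable]: "T \<in> M \<rightarrow>\<^sub>M M"
    and invariant: "\<And>F. F \<in> borel_measurable M \<Longrightarrow> (\<integral>\<^sup>+x. F (T x) \<partial>M) = (\<integral>\<^sup>+x. F x \<partial>M)"
  shows "distr M M T = M"
proof (rule measure_eqI)
  fix A assume "A \<in> sets (distr M M T)"
  then have [measurable]: "A \<in> sets M" by simp
  have "emeasure (distr M M T) A = (\<integral>\<^sup>+x. indicator A x \<partial>distr M M T)"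
    by simp
  also have "\<dots> = (\<integral>\<^sup>+x. indicator A (T x) \<partial>M)"
    by (rule nn_integral_distr) auto
  also have "\<dots> = emeasure M A"
    by (subst invariant) auto
  finally show "emeasure (distr M M T) A = emeasure M A" .
qed simp

definition shear_Re :: "real \<Rightarrow> complex \<Rightarrow> complex" where
  "shear_Re c x = Complex (Re x + c * Im x) (Im x)"

definition shear_Im :: "real \<Rightarrow> complex \<Rightarrow> complex" where
  "shear_Im c x = Complex (Re x) (Im x + c * Re x)"

lemma shear_Re_measurable [measurable]: "shear_Re c \<in> borel_measurable borel"
  unfolding shear_Re_def by measurable

lemma shear_Im_measurable [measurable]: "shear_Im c \<in> borel_measurable borel"
  unfolding shear_Im_def by measurable

lemma distr_lborel_shear_Re: "distr lborel lborel (shear_Re c) = lborel"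
proof (rule distr_eq_if_nn_integral_invariant)
  fix F :: "complex \<Rightarrow> ennreal" assume [measurable]: "F \<in> borel_measurable lborel"
  have "(\<integral>\<^sup>+x. F (shear_Re c x) \<partial>lborel)
      = (\<integral>\<^sup>+b. \<integral>\<^sup>+a. F (Complex (a + c * b) b) \<partial>lborel \<partial>lborel)"
    by (subst nn_integral_lborel_complex') (auto simp: shear_Re_def)
  also have "\<dots> = (\<integral>\<^sup>+b. \<integral>\<^sup>+a. F (Complex a b) \<partial>lborel \<partial>lborel)"
    by (intro nn_integral_cong nn_integral_lborel_shift[where g = "\<lambda>a. F (Complex a _)"]) auto
  also have "\<dots> = (\<integral>\<^sup>+x. F x \<partial>lborel)"
    by (subst nn_integral_lborel_complex') auto
  finally show "(\<integral>\<^sup>+x. F (shear_Re c x) \<partial>lborel) = (\<integral>\<^sup>+x. F x \<partial>lborel)" .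
qed simp

lemma distr_lborel_shear_Im: "distr lborel lborel (shear_Im c) = lborel"
proof (rule distr_eq_if_nn_integral_invariant)
  fix F :: "complex \<Rightarrow> ennreal" assume [measurable]: "F \<in> borel_measurable lborel"
  have "(\<integral>\<^sup>+x. F (shear_Im c x) \<partial>lborel)
      = (\<integral>\<^sup>+a. \<integral>\<^sup>+b. F (Complex a (b + c * a)) \<partial>lborel \<partial>lborel)"
    by (subst nn_integral_lborel_complex) (auto simp: shear_Im_def)
  also have "\<dots> = (\<integral>\<^sup>+a. \<integral>\<^sup>+b. F (Complex a b) \<partial>lborel \<partial>lborel)"
    by (intro nn_integral_cong nn_integral_lborel_shift[where g = "\<lambda>b. F (Complex _ b)"]) auto
  also have "\<dots> = (\<integral>\<^sup>+x. F x \<partial>lborel)"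
    by (subst nn_integral_lborel_complex) auto
  finally show "(\<integral>\<^sup>+x. F (shear_Im c x) \<partial>lborel) = (\<integral>\<^sup>+x. F x \<partial>lborel)" .
qed simp

text \<open>Paeth's decomposition of a rotation into three shears, with \<open>t = tan (\<theta>/2)\<close>;
  it needs \<open>u \<noteq> -1\<close>.\<close>
lemma mult_unimodular_eq_shears:
  assumes "cmod u = 1" "u \<noteq> -1"
  defines "t \<equiv> Im u / (1 + Re u)"
  shows "(\<lambda>x. u * x) = shear_Re (- t) \<circ> shear_Im (Im u) \<circ> shear_Re (- t)"
proof -
  define c s where "c = Re u" and "s = Im u"
  have cs: "c\<^sup>2 + s\<^sup>2 = 1"
    using assms(1) unfolding c_def s_def cmod_def by simp
  have "1 + c \<noteq> 0"
  proof
    assume "1 + c = 0"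
    then have "c = -1" by simp
    with cs have "s = 0" by simp
    with \<open>c = -1\<close> assms(2) show False by (simp add: c_def s_def complex_eq_iff)
  qed
  then have ts: "t * s = 1 - c" and tc: "t * (1 + c) = s"
    using cs by (simp_all add: t_def c_def s_def field_simps power2_eq_square flip: s_def c_def)
  show ?thesis
  proof
    fix x
    have "Re x - t * Im x - t * (Im x + s * (Re x - t * Im x)) = Re x * (1 - t * s) - Im x * (t * (1 + (1 - t * s)))"
      by (simp add: algebra_simps)
    also have "\<dots> = c * Re x - s * Im x"
      using ts tc by simp
    finally have "Re x - t * Im x - t * (Im x + s * (Re x - t * Im x)) = c * Re x - s * Im x" .
    moreover have "Im x + s * (Re x - t * Im x) = s * Re x + (1 - t * s) * Im x"
      by (simp add: algebra_simps)
    then have "Im x + s * (Re x - t * Im x) = s * Re x + c * Im x"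
      using ts by simp
    ultimately show "u * x = (shear_Re (- t) \<circ> shear_Im (Im u) \<circ> shear_Re (- t)) x"
      by (simp add: shear_Re_def shear_Im_def complex_eq_iff c_def s_def)
  qed
qed

lemma distr_lborel_mult_unimodular:
  fixes u :: complex
  assumes "cmod u = 1"
  shows "distr lborel lborel (\<lambda>x. u * x) = lborel"
proof -
  have rotation: "distr lborel lborel (\<lambda>x. v * x) = lborel" if "cmod v = 1" "v \<noteq> -1" for v :: complex
  proof -
    define t where "t = Im v / (1 + Re v)"
    have "distr lborel lborel (shear_Re (- t) \<circ> shear_Im (Im v) \<circ> shear_Re (- t))
      = distr (distr (distr lborel lborel (shear_Re (- t))) lborel (shear_Im (Im v))) lborel (shear_Re (- t))"
      by (simp add: distr_distr comp_assoc)
    also have "\<dots> = lborel"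
      by (simp add: distr_lborel_shear_Re distr_lborel_shear_Im)
    finally show ?thesis
      by (simp add: mult_unimodular_eq_shears[OF that] t_def comp_def)
  qed
  show ?thesis
  proof (cases "u = -1")
    case True
    then have "distr lborel lborel (\<lambda>x. u * x) = distr lborel lborel ((\<lambda>x. \<i> * x) \<circ> (\<lambda>x. \<i> * x))"
      by (simp add: comp_def)
    also have "\<dots> = distr (distr lborel lborel (\<lambda>x. \<i> * x)) lborel (\<lambda>x. \<i> * x)"
      by (simp add: distr_distr)
    also have "\<dots> = lborel" using rotation[of \<i>] by (simp add: complex_eq_iff)
    finally show ?thesis .
  qed (use assms rotation in simp)
qed

text \<open>Rotating by \<open>u = cis (\<pi> / (i - j))\<close> multiplies the integrand by \<open>u^i * cnj u ^ j = -1\<close>.\<close>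
lemma integral_lborel_radial_monomial_offdiag:
  fixes g :: "real \<Rightarrow> real"
  assumes [measurable]: "g \<in> borel_measurable borel" and "i \<noteq> j"
  shows "(\<integral>x. g (cmod x) *\<^sub>R (x ^ i * cnj x ^ j) \<partial>lborel) = 0"
proof -
  define u where "u = cis (pi / (real i - real j))"
  have norm_u: "cmod u = 1"
    by (simp add: u_def)
  have "u ^ i * cnj u ^ j = cis ((real i - real j) * (pi / (real i - real j)))"
    by (simp add: u_def Complex.DeMoivre cis_cnj cis_mult algebra_simps diff_divide_distrib)
  then have u_pow: "u ^ i * cnj u ^ j = -1"
    using \<open>i \<noteq> j\<close> by simp
  define H where "H = (\<lambda>x. g (cmod x) *\<^sub>R (x ^ i * cnj x ^ j))"
  have [measurable]: "H \<in> borel_measurable borel"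
    unfolding H_def by measurable
  have "integral\<^sup>L lborel H = integral\<^sup>L (distr lborel lborel (\<lambda>x. u * x)) H"
    by (simp add: distr_lborel_mult_unimodular norm_u)
  also have "\<dots> = integral\<^sup>L lborel (\<lambda>x. H (u * x))"
    by (rule integral_distr) auto
  also have "\<dots> = integral\<^sup>L lborel (\<lambda>x. - H x)"
  proof (rule Bochner_Integration.integral_cong[OF refl])
    fix x
    have "(u * x) ^ i * cnj (u * x) ^ j = (u ^ i * cnj u ^ j) * (x ^ i * cnj x ^ j)"
      by (simp add: power_mult_distrib mult_ac)
    then show "H (u * x) = - H x"
      by (simp add: H_def norm_mult norm_u u_pow)
  qed
  finally have "integral\<^sup>L lborel H = - integral\<^sup>L lborel H"
    by simp
  then show ?thesis
    by (simp add: H_def)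
qed

section \<open>Radial integrals and a Beta integral\<close>

lemma emeasure_lborel_cmod_sq_less:
  "emeasure lborel {x::complex. (cmod x)\<^sup>2 < a} = ennreal (pi * max a 0)"
proof (cases "a \<le> 0")
  case True
  then have "{x::complex. (cmod x)\<^sup>2 < a} = {}"
    using zero_le_power2 not_le order_trans by blast
  then show ?thesis using True by simp
next
  case False
  then have "{x::complex. (cmod x)\<^sup>2 < a} = ball 0 (sqrt a)"
  proof -
    have "(cmod x)\<^sup>2 < a \<longleftrightarrow> cmod x < sqrt a" for x :: complex
      using real_sqrt_less_iff[of "(cmod x)\<^sup>2" a] by simp
    then show ?thesis by (simp add: set_eq_iff dist_norm)
  qed
  moreover have "emeasure lborel (ball (0::complex) (sqrt a)) = ennreal (pi * a)"
    using False by (subst emeasure_ball) (auto simp: unit_ball_vol_2)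
  ultimately show ?thesis using False by simp
qed

lemma distr_lborel_cmod_sq:
  "distr lborel borel (\<lambda>x::complex. (cmod x)\<^sup>2) = density lborel (\<lambda>t. ennreal pi * indicator {0..} t)"
proof (rule measure_eqI_generator_eq[where E = "range lessThan" and \<Omega> = UNIV and A = "\<lambda>i. {..<real i}"])
  show "Int_stable (range lessThan :: real set set)"
    by (auto simp: Int_stable_def intro: image_eqI[where x = "min _ _"])
  have borel_Iio: "sets (borel::real measure) = sigma_sets UNIV (range lessThan)"
    by (metis borel_Iio sets_measure_of top_greatest Pow_UNIV)
  then show "sets (distr lborel borel (\<lambda>x::complex. (cmod x)\<^sup>2)) = sigma_sets UNIV (range lessThan)"
    and "sets (density lborel (\<lambda>t::real. ennreal pi * indicator {0..} t)) = sigma_sets UNIV (range lessThan)"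
    by simp_all
  show "range lessThan \<subseteq> Pow (UNIV::real set)" "range (\<lambda>i. {..<real i}) \<subseteq> range lessThan"
    "(\<Union>i. {..<real i}) = UNIV"
    by (auto intro: reals_Archimedean2)
  have distr_less: "emeasure (distr lborel borel (\<lambda>x::complex. (cmod x)\<^sup>2)) {..<a} = ennreal (pi * max a 0)" for a
    by (subst emeasure_distr) (auto simp: emeasure_lborel_cmod_sq_less vimage_def)
  then show "emeasure (distr lborel borel (\<lambda>x::complex. (cmod x)\<^sup>2)) {..<real i} \<noteq> \<infinity>" for i
    by simp
  fix X :: "real set" assume "X \<in> range lessThan"
  then obtain a where X: "X = {..<a}" by auto
  have "emeasure (density lborel (\<lambda>t::real. ennreal pi * indicator {0..} t)) {..<a}
      = (\<integral>\<^sup>+t. ennreal pi * indicator {0..<a} t \<partial>lborel)"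
    by (subst emeasure_density) (auto intro!: nn_integral_cong simp: indicator_def)
  also have "\<dots> = ennreal (pi * max a 0)"
    by (subst nn_integral_cmult) (auto simp: ennreal_mult max_def)
  finally show "emeasure (distr lborel borel (\<lambda>x::complex. (cmod x)\<^sup>2)) X
      = emeasure (density lborel (\<lambda>t. ennreal pi * indicator {0..} t)) X"
    using distr_less X by simp
qed

lemma nn_integral_lborel_radial:
  fixes V :: "real \<Rightarrow> ennreal"
  assumes [measurable]: "V \<in> borel_measurable borel"
  shows "(\<integral>\<^sup>+x. V ((cmod x)\<^sup>2) \<partial>(lborel::complex measure)) = pi * (\<integral>\<^sup>+t. V t * indicator {0..} t \<partial>lborel)"
proof -
  have "(\<integral>\<^sup>+x. V ((cmod x)\<^sup>2) \<partial>(lborel::complex measure))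
      = (\<integral>\<^sup>+t. V t \<partial>distr lborel borel (\<lambda>x::complex. (cmod x)\<^sup>2))"
    by (subst nn_integral_distr) auto
  also have "\<dots> = (\<integral>\<^sup>+t. ennreal pi * (V t * indicator {0..} t) \<partial>lborel)"
    by (simp add: distr_lborel_cmod_sq nn_integral_density mult_ac)
  also have "\<dots> = pi * (\<integral>\<^sup>+t. V t * indicator {0..} t \<partial>lborel)"
    by (rule nn_integral_cmult) simp
  finally show ?thesis .
qed

lemma nn_integral_inverse_one_plus_power:
  "(\<integral>\<^sup>+t. ennreal (1 / (1 + t) ^ (n + 2)) * indicator {0..} t \<partial>lborel) = ennreal (1 / (real n + 1))"
proof -
  define F where "F t = - 1 / (1 + real n) * inverse ((1 + t) ^ Suc n)" for t :: real
  have "(\<integral>\<^sup>+t. ennreal (1 / (1 + t) ^ (n + 2)) * indicator {0..} t \<partial>lborel) = ennreal (0 - F 0)"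
  proof (rule nn_integral_FTC_atLeast)
    show "DERIV F t :> 1 / (1 + t) ^ (n + 2)" if "0 \<le> t" for t :: real
    proof -
      have "DERIV (\<lambda>t. (1 + t) ^ Suc n) t :> (1 + real n) * (1 * (1 + t) ^ n)"
        by (rule DERIV_power_Suc) (auto intro!: derivative_eq_intros)
      then have "DERIV (\<lambda>t. inverse ((1 + t) ^ Suc n)) t
          :> - ((1 + real n) * (1 * (1 + t) ^ n) * inverse (((1 + t) ^ Suc n) ^ Suc (Suc 0)))"
        by (rule DERIV_inverse_fun) (use that in simp)
      then have deriv: "DERIV F t :> - 1 / (1 + real n) * - ((1 + real n) * (1 * (1 + t) ^ n) * inverse (((1 + t) ^ Suc n) ^ Suc (Suc 0)))"
        unfolding F_def by (rule DERIV_cmult)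
      have square: "((1 + t) ^ Suc n) ^ Suc (Suc 0) = (1 + t) ^ n * (1 + t) ^ (n + 2)"
        by (simp flip: power_add)
      have cancel: "- 1 / N * - (N * (1 * P) * inverse (P * Q)) = 1 / Q"
        if "N \<noteq> 0" "P \<noteq> 0" "Q \<noteq> 0" for N P Q :: real
        using that by (simp add: field_simps)
      have nonzero: "1 + real n \<noteq> 0" "(1 + t) ^ n \<noteq> 0" "(1 + t) ^ (n + 2) \<noteq> 0"
        using that by simp_all
      from deriv show ?thesis
        unfolding square cancel[OF nonzero] .
    qed
    show "(F \<longlongrightarrow> 0) at_top"
      unfolding F_def by real_asymp
  qed auto
  then show ?thesis by (simp add: F_def)
qed

lemma factorial_beta_recurrence:
  "fact j * fact n / fact (j + n + 1) - fact j * fact (Suc n) / fact (j + Suc n + 1)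
     = (fact (Suc j) * fact n / fact (Suc j + n + 1) :: real)"
proof -
  have facts: "fact (j + Suc n + 1) = real (j + n + 2) * (fact (j + n + 1) :: real)"
    "fact (Suc j + n + 1) = real (j + n + 2) * (fact (j + n + 1) :: real)"
    "fact (Suc n) = real (n + 1) * (fact n :: real)"
    "fact (Suc j) = real (j + 1) * (fact j :: real)"
    by (simp_all add: algebra_simps)
  have gen: "a * b / F - a * (real (n + 1) * b) / (real (j + n + 2) * F)
      = real (j + 1) * a * b / (real (j + n + 2) * F)" if "F > 0" for a b F :: real
  proof -
    have "real (j + n + 2) * F > 0" using that by simp
    then show ?thesis
      by (simp add: divide_simps) (simp add: algebra_simps)
  qed
  have "fact (j + n + 1) > (0 :: real)" by simp
  from gen[OF this, of "fact j" "fact n"] show ?thesis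
    unfolding facts by (simp only: mult.assoc)
qed

lemma add_divide_one_plus_cancel:
  fixes a P t :: real
  assumes "1 + t \<noteq> 0"
  shows "t * a / ((1 + t) * P) + a / ((1 + t) * P) = a / P"
proof -
  have "t * a / ((1 + t) * P) + a / ((1 + t) * P) = ((1 + t) * a) / ((1 + t) * P)"
    by (simp add: add_divide_distrib[symmetric] algebra_simps)
  also have "\<dots> = a / P" using assms by simp
  finally show ?thesis .
qed

lemma nn_integral_beta_prime:
  "(\<integral>\<^sup>+t. ennreal (t ^ j / (1 + t) ^ (j + n + 2)) * indicator {0..} t \<partial>lborel)
     = ennreal (fact j * fact n / fact (j + n + 1))"
proof (induction j arbitrary: n)
  case 0
  show ?case using nn_integral_inverse_one_plus_power[of n] by simp
next
  case (Suc j)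
  let ?I = "\<lambda>j n. (\<integral>\<^sup>+t. ennreal (t ^ j / (1 + t) ^ (j + n + 2)) * indicator {0..} t \<partial>lborel)"
  have split: "ennreal (t ^ Suc j / (1 + t) ^ (Suc j + n + 2)) * indicator {0..} t
      + ennreal (t ^ j / (1 + t) ^ (j + Suc n + 2)) * indicator {0..} t
      = ennreal (t ^ j / (1 + t) ^ (j + n + 2)) * indicator {0..} t" for t :: real
  proof (cases "0 \<le> t")
    case True
    have "t ^ Suc j = t * t ^ j" "(1 + t) ^ (Suc j + n + 2) = (1 + t) * (1 + t) ^ (j + n + 2)"
      "(1 + t) ^ (j + Suc n + 2) = (1 + t) * (1 + t) ^ (j + n + 2)"
      by simp_all
    then have "t ^ Suc j / (1 + t) ^ (Suc j + n + 2) + t ^ j / (1 + t) ^ (j + Suc n + 2)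
        = t ^ j / (1 + t) ^ (j + n + 2)"
      using add_divide_one_plus_cancel True by simp
    then show ?thesis
      using True by (simp add: ennreal_plus[symmetric] del: ennreal_plus)
  qed simp
  have "?I (Suc j) n + ?I j (Suc n) = (\<integral>\<^sup>+t. ennreal (t ^ Suc j / (1 + t) ^ (Suc j + n + 2)) * indicator {0..} t
      + ennreal (t ^ j / (1 + t) ^ (j + Suc n + 2)) * indicator {0..} t \<partial>lborel)"
    by (rule nn_integral_add[symmetric]) auto
  also have "\<dots> = ?I j n"
    by (simp only: split)
  finally have sum: "?I (Suc j) n + ennreal (fact j * fact (Suc n) / fact (j + Suc n + 1))
      = ennreal (fact j * fact n / fact (j + n + 1))"
    unfolding Suc.IH .
  have "?I (Suc j) n = ?I (Suc j) n + ennreal (fact j * fact (Suc n) / fact (j + Suc n + 1))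
      - ennreal (fact j * fact (Suc n) / fact (j + Suc n + 1))"
    by simp
  also have "\<dots> = ennreal (fact j * fact n / fact (j + n + 1) - fact j * fact (Suc n) / fact (j + Suc n + 1))"
    by (simp only: sum ennreal_minus fact_ge_zero divide_nonneg_nonneg mult_nonneg_nonneg)
  finally show ?case
    by (simp only: factorial_beta_recurrence)
qed

section \<open>The measures \<open>\<iota>\<^sub>\<tau>\<close> and the reproducing kernel of \<open>\<H>\<^sub>\<mu>\<close>\<close>

lemma one_plus_cmod_sq_pos: "0 < 1 + (cmod z)\<^sup>2"
  by (simp add: add_pos_nonneg)

lemma iota_dens_nonneg: "0 \<le> iota_dens tau z"
  unfolding iota_dens_def by simp

lemma iota_dens_measurable [measurable]: "iota_dens tau \<in> borel_measurable borel"
  unfolding iota_dens_def by measurable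

lemma sets_iota [simp, measurable_cong]: "sets (iota tau) = sets borel"
  by (simp add: iota_def)

lemma space_iota [simp]: "space (iota tau) = UNIV"
  by (simp add: iota_def)

lemma measurable_iota [simp]: "measurable (iota tau) N = measurable borel N"
  by (simp cong: measurable_cong_sets)

definition weight :: "nat \<Rightarrow> complex \<Rightarrow> real" where
  "weight mu x = (1 + (cmod x)\<^sup>2) ^ mu"

lemma weight_pos: "0 < weight mu x"
  unfolding weight_def using one_plus_cmod_sq_pos by simp

lemma weight_measurable [measurable]: "weight mu \<in> borel_measurable borel"
  unfolding weight_def by measurable

lemma iota_dens_eq_weight: "iota_dens mu x = (real mu + 1) / weight mu x * iota_dens 0 x"
  unfolding iota_dens_def weight_def by (simp add: field_simps)

lemma integral_iota_eq_iota0: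
  fixes F :: "complex \<Rightarrow> complex"
  assumes [measurable]: "F \<in> borel_measurable borel"
  shows "integral\<^sup>L (iota mu) F = (real mu + 1) * integral\<^sup>L (iota 0) (\<lambda>x. F x / weight mu x)"
proof -
  have "integral\<^sup>L (iota mu) F = integral\<^sup>L lborel (\<lambda>x. iota_dens mu x *\<^sub>R F x)"
    unfolding iota_def by (rule integral_density) (auto simp: iota_dens_nonneg)
  also have "\<dots> = integral\<^sup>L lborel (\<lambda>x. iota_dens 0 x *\<^sub>R ((real mu + 1) * (F x / weight mu x)))"
    by (intro Bochner_Integration.integral_cong refl)
      (simp add: iota_dens_eq_weight[of mu] scaleR_conv_of_real field_simps)
  also have "\<dots> = integral\<^sup>L (iota 0) (\<lambda>x. (real mu + 1) * (F x / weight mu x))"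
    unfolding iota_def by (rule integral_density[symmetric]) (auto simp: iota_dens_nonneg)
  also have "\<dots> = (real mu + 1) * integral\<^sup>L (iota 0) (\<lambda>x. F x / weight mu x)"
    by (rule integral_mult_right_zero)
  finally show ?thesis .
qed

lemma integrable_iota_iff_iota0:
  fixes F :: "complex \<Rightarrow> complex"
  assumes [measurable]: "F \<in> borel_measurable borel"
  shows "integrable (iota mu) F \<longleftrightarrow> integrable (iota 0) (\<lambda>x. F x / weight mu x)"
proof -
  have "integrable (iota mu) F \<longleftrightarrow> integrable lborel (\<lambda>x. iota_dens mu x *\<^sub>R F x)"
    unfolding iota_def by (rule integrable_density) (auto simp: iota_dens_nonneg)
  also have "\<dots> \<longleftrightarrow> integrable lborel (\<lambda>x. (real mu + 1) *\<^sub>R (iota_dens 0 x *\<^sub>R (F x / weight mu x)))"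
    by (intro Bochner_Integration.integrable_cong refl)
      (simp add: iota_dens_eq_weight[of mu] scaleR_conv_of_real field_simps)
  also have "\<dots> \<longleftrightarrow> integrable lborel (\<lambda>x. iota_dens 0 x *\<^sub>R (F x / weight mu x))"
  proof
    assume "integrable lborel (\<lambda>x. (real mu + 1) *\<^sub>R (iota_dens 0 x *\<^sub>R (F x / weight mu x)))"
    then have "integrable lborel
        (\<lambda>x. inverse (real mu + 1) *\<^sub>R ((real mu + 1) *\<^sub>R (iota_dens 0 x *\<^sub>R (F x / weight mu x))))"
      by (rule integrable_scaleR_right)
    then show "integrable lborel (\<lambda>x. iota_dens 0 x *\<^sub>R (F x / weight mu x))"
      by (simp add: mult.assoc[symmetric])
  qed (rule integrable_scaleR_right)
  also have "\<dots> \<longleftrightarrow> integrable (iota 0) (\<lambda>x. F x / weight mu x)"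
    unfolding iota_def by (rule integrable_density[symmetric]) (auto simp: iota_dens_nonneg)
  finally show ?thesis .
qed

lemma inverse_binomial_eq_fact_ratio:
  assumes "j \<le> mu"
  shows "1 / real (mu choose j) = (real mu + 1) * (fact j * fact (mu - j) / fact (j + (mu - j) + 1))"
proof -
  have "fact (j + (mu - j) + 1) = (real mu + 1) * (fact mu :: real)"
    using assms by (simp add: algebra_simps)
  then show ?thesis
    by (simp add: binomial_fact[OF assms])
qed

lemma nn_integral_iota_dens_cmod_power:
  assumes "j \<le> mu"
  shows "(\<integral>\<^sup>+x. ennreal (iota_dens mu x * (cmod x) ^ (2 * j)) \<partial>lborel) = ennreal (1 / real (mu choose j))"
proof -
  define c where "c = (real mu + 1) / pi"
  define B where "B = fact j * fact (mu - j) / (fact (j + (mu - j) + 1) :: real)"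
  define n where "n = j + (mu - j) + 2"
  have c_nonneg: "0 \<le> c" by (simp add: c_def)
  have rearrange: "a / P / (pi * Q) * T = (a / pi) * (T / (P * Q))" for a P Q T :: real
    by (simp add: divide_inverse inverse_mult_distrib ac_simps)
  have radial: "(\<integral>\<^sup>+x. ennreal ((cmod x)\<^sup>2 ^ j / (1 + (cmod x)\<^sup>2) ^ n) \<partial>lborel)
      = ennreal pi * (\<integral>\<^sup>+t. ennreal (t ^ j / (1 + t) ^ n) * indicator {0..} t \<partial>lborel)"
    by (rule nn_integral_lborel_radial) measurable
  have "iota_dens mu x * (cmod x) ^ (2 * j) = c * ((cmod x)\<^sup>2 ^ j / (1 + (cmod x)\<^sup>2) ^ n)" for x
  proof -
    have "n = mu + 2" using assms by (simp add: n_def)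
    then show ?thesis
      unfolding iota_dens_def c_def by (simp only: power_mult power_add rearrange)
  qed
  then have "(\<integral>\<^sup>+x. ennreal (iota_dens mu x * (cmod x) ^ (2 * j)) \<partial>lborel)
      = (\<integral>\<^sup>+x. ennreal c * ennreal ((cmod x)\<^sup>2 ^ j / (1 + (cmod x)\<^sup>2) ^ n) \<partial>lborel)"
    by (simp only: ennreal_mult'[OF c_nonneg])
  also have "\<dots> = ennreal c * (\<integral>\<^sup>+x. ennreal ((cmod x)\<^sup>2 ^ j / (1 + (cmod x)\<^sup>2) ^ n) \<partial>lborel)"
    by (rule nn_integral_cmult) measurable
  also have "\<dots> = ennreal c * (ennreal pi * (\<integral>\<^sup>+t. ennreal (t ^ j / (1 + t) ^ n) * indicator {0..} t \<partial>lborel))"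
    by (simp only: radial)
  also have "\<dots> = ennreal c * (ennreal pi * ennreal B)"
    by (simp only: n_def B_def nn_integral_beta_prime)
  also have "\<dots> = ennreal (1 / real (mu choose j))"
  proof -
    have "c * (pi * B) = 1 / real (mu choose j)"
      unfolding inverse_binomial_eq_fact_ratio[OF assms] B_def c_def by simp
    then show ?thesis
      by (simp only: ennreal_mult'[OF pi_ge_zero, symmetric] ennreal_mult'[OF c_nonneg, symmetric])
  qed
  finally show ?thesis .
qed

lemma emeasure_iota0_UNIV: "emeasure (iota 0) UNIV = 1"
proof -
  have "emeasure (iota 0) UNIV = (\<integral>\<^sup>+x. ennreal (iota_dens 0 x * (cmod x) ^ (2 * 0)) \<partial>lborel)"
    unfolding iota_def by (subst emeasure_density) auto
  then show ?thesis
    using nn_integral_iota_dens_cmod_power[of 0 0] by simp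
qed

interpretation iota0: finite_measure "iota 0"
  by (rule finite_measureI) (simp add: emeasure_iota0_UNIV)

lemma power_le_one_plus_sq_power:
  fixes r :: real
  assumes "0 \<le> r" "n \<le> 2 * mu"
  shows "r ^ n \<le> (1 + r\<^sup>2) ^ mu"
proof (cases "r \<le> 1")
  case True
  then have "r ^ n \<le> 1" using assms by (simp add: power_le_one)
  also have "1 \<le> (1 + r\<^sup>2) ^ mu" by (simp add: one_le_power)
  finally show ?thesis .
next
  case False
  then have "r ^ n \<le> r ^ (2 * mu)" using assms by (intro power_increasing) auto
  also have "\<dots> = (r\<^sup>2) ^ mu" by (simp add: power_mult)
  also have "\<dots> \<le> (1 + r\<^sup>2) ^ mu" by (intro power_mono) auto
  finally show ?thesis .
qed

lemma integrable_iota_if_weight_bounded: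
  fixes F :: "complex \<Rightarrow> complex"
  assumes [measurable]: "F \<in> borel_measurable borel"
    and bound: "\<And>x. cmod (F x) \<le> C * weight mu x"
  shows "integrable (iota mu) F"
proof -
  have "integrable (iota 0) (\<lambda>x. F x / weight mu x)"
  proof (rule iota0.integrable_const_bound[where B = C])
    show "AE x in iota 0. norm (F x / weight mu x) \<le> C"
    proof (rule AE_I2)
      fix x
      have "norm (F x / weight mu x) = cmod (F x) / weight mu x"
        using weight_pos[of mu x] by (simp add: norm_divide)
      also have "\<dots> \<le> C"
        using bound[of x] weight_pos[of mu x] by (simp add: divide_le_eq)
      finally show "norm (F x / weight mu x) \<le> C" .
    qed
  qed measurable
  then show ?thesis
    using integrable_iota_iff_iota0[OF assms(1)] by blast
qed

lemma integrable_iota_monomial: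
  assumes "i + j \<le> 2 * mu"
  shows "integrable (iota mu) (\<lambda>x. x ^ i * cnj x ^ j)"
proof (rule integrable_iota_if_weight_bounded[where C = 1])
  show "cmod (x ^ i * cnj x ^ j) \<le> 1 * weight mu x" for x
  proof -
    have "cmod (x ^ i * cnj x ^ j) = cmod x ^ (i + j)"
      by (simp add: norm_mult norm_power power_add)
    then show ?thesis
      using power_le_one_plus_sq_power[OF norm_ge_zero assms, of x] by (simp add: weight_def)
  qed
qed measurable

lemma monomial_cnj_monomial_eq: "x ^ j * cnj x ^ j = complex_of_real ((cmod x) ^ (2 * j))"
  by (simp only: power_mult_distrib[symmetric] complex_norm_square[symmetric] of_real_power power_mult)

lemma integral_iota_monomial_diag:
  assumes "j \<le> mu"
  shows "integral\<^sup>L (iota mu) (\<lambda>x. x ^ j * cnj x ^ j) = 1 / of_nat (mu choose j)"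
proof -
  have "(\<integral>\<^sup>+x. ennreal ((cmod x) ^ (2 * j)) \<partial>iota mu)
      = (\<integral>\<^sup>+x. ennreal (iota_dens mu x * (cmod x) ^ (2 * j)) \<partial>lborel)"
    unfolding iota_def by (subst nn_integral_density) (auto simp: ennreal_mult' iota_dens_nonneg)
  then have "integral\<^sup>L (iota mu) (\<lambda>x. (cmod x) ^ (2 * j)) = enn2real (ennreal (1 / real (mu choose j)))"
    by (subst integral_eq_nn_integral) (simp_all add: nn_integral_iota_dens_cmod_power[OF assms])
  then have "integral\<^sup>L (iota mu) (\<lambda>x. (cmod x) ^ (2 * j)) = 1 / real (mu choose j)"
    by simp
  moreover have "integral\<^sup>L (iota mu) (\<lambda>x. x ^ j * cnj x ^ j)
      = complex_of_real (integral\<^sup>L (iota mu) (\<lambda>x. (cmod x) ^ (2 * j)))"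
    by (simp only: monomial_cnj_monomial_eq integral_complex_of_real)
  ultimately show ?thesis
    by simp
qed

lemma integral_iota_monomial:
  assumes "j \<le> mu"
  shows "integral\<^sup>L (iota mu) (\<lambda>x. x ^ i * cnj x ^ j) = (if i = j then 1 / of_nat (mu choose j) else 0)"
proof (cases "i = j")
  case True
  then show ?thesis
    using integral_iota_monomial_diag[OF assms] by simp
next
  case False
  have "integral\<^sup>L (iota mu) (\<lambda>x. x ^ i * cnj x ^ j) = (\<integral>x. iota_dens mu x *\<^sub>R (x ^ i * cnj x ^ j) \<partial>lborel)"
    unfolding iota_def by (rule integral_density) (auto simp: iota_dens_nonneg)
  also have "\<dots> = 0"
    unfolding iota_dens_def
    by (rule integral_lborel_radial_monomial_offdiag[OF _ False, where g = "\<lambda>r. (real mu + 1) / (1 + r\<^sup>2) ^ mu / (pi * (1 + r\<^sup>2)\<^sup>2)"])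
      measurable
  finally show ?thesis
    using False by simp
qed

text \<open>The monomials \<open>x^l\<close>, \<open>l \<le> \<mu>\<close>, are orthogonal in \<open>L\<^sup>2(\<iota>\<^sub>\<mu>)\<close> with \<open>\<parallel>x^l\<parallel>\<^sup>2 = 1 / (\<mu> choose l)\<close>.\<close>
lemma integral_iota_sum_monomials:
  fixes a :: "nat \<Rightarrow> nat \<Rightarrow> complex"
  shows "integral\<^sup>L (iota mu) (\<lambda>x. \<Sum>l\<le>mu. \<Sum>i\<le>mu. a l i * (x ^ l * cnj x ^ i))
       = (\<Sum>l\<le>mu. a l l / of_nat (mu choose l))"
proof -
  have integrable: "integrable (iota mu) (\<lambda>x. a l i * (x ^ l * cnj x ^ i))" if "l \<le> mu" "i \<le> mu" for l i
    using integrable_iota_monomial[of l i mu] that by simp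
  have "integral\<^sup>L (iota mu) (\<lambda>x. \<Sum>l\<le>mu. \<Sum>i\<le>mu. a l i * (x ^ l * cnj x ^ i))
      = (\<Sum>l\<le>mu. integral\<^sup>L (iota mu) (\<lambda>x. \<Sum>i\<le>mu. a l i * (x ^ l * cnj x ^ i)))"
    by (rule Bochner_Integration.integral_sum) (use integrable in \<open>auto intro!: integrable_sum\<close>)
  also have "\<dots> = (\<Sum>l\<le>mu. \<Sum>i\<le>mu. integral\<^sup>L (iota mu) (\<lambda>x. a l i * (x ^ l * cnj x ^ i)))"
    by (intro sum.cong refl Bochner_Integration.integral_sum) (use integrable in auto)
  also have "\<dots> = (\<Sum>l\<le>mu. \<Sum>i\<le>mu. a l i * integral\<^sup>L (iota mu) (\<lambda>x. x ^ l * cnj x ^ i))"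
    by (intro sum.cong refl integral_mult_right_zero)
  also have "\<dots> = (\<Sum>l\<le>mu. \<Sum>i\<le>mu. a l i * (if l = i then 1 / of_nat (mu choose i) else 0))"
    by (intro sum.cong refl) (simp add: integral_iota_monomial)
  also have "\<dots> = (\<Sum>l\<le>mu. a l l / of_nat (mu choose l))"
    by (simp add: if_distrib sum.delta cong: if_cong)
  finally show ?thesis .
qed

lemma integral_iota_reproducing:
  fixes q :: "complex poly"
  assumes "degree q \<le> mu"
  shows "integral\<^sup>L (iota mu) (\<lambda>x. poly q x * (1 + z * cnj x) ^ mu) = poly q z"
proof -
  have "poly q x * (1 + z * cnj x) ^ mu
      = (\<Sum>l\<le>mu. \<Sum>i\<le>mu. (coeff q l * of_nat (mu choose i) * z ^ i) * (x ^ l * cnj x ^ i))" for x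
    unfolding poly_eq_sum_coeff[OF assms, of x] one_plus_power_eq_sum sum_product
    by (intro sum.cong refl) (simp add: power_mult_distrib ac_simps)
  then have "integral\<^sup>L (iota mu) (\<lambda>x. poly q x * (1 + z * cnj x) ^ mu)
      = (\<Sum>l\<le>mu. coeff q l * of_nat (mu choose l) * z ^ l / of_nat (mu choose l))"
    by (simp only: integral_iota_sum_monomials)
  also have "\<dots> = poly q z"
    by (simp add: poly_eq_sum_coeff[OF assms])
  finally show ?thesis .
qed

lemma integral_iota0_reproducing_cnj:
  fixes q :: "complex poly"
  assumes "degree q \<le> mu"
  shows "integral\<^sup>L (iota 0) (\<lambda>x. (1 + x * cnj z) ^ mu * cnj (poly q x) / weight mu x)
       = cnj (poly q z) / (of_nat mu + 1)"
proof -
  have "(real mu + 1) * integral\<^sup>L (iota 0) (\<lambda>x. (1 + x * cnj z) ^ mu * cnj (poly q x) / weight mu x)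
      = integral\<^sup>L (iota mu) (\<lambda>x. (1 + x * cnj z) ^ mu * cnj (poly q x))"
    by (rule integral_iota_eq_iota0[symmetric]) measurable
  also have "\<dots> = integral\<^sup>L (iota mu) (\<lambda>x. cnj (poly q x * (1 + z * cnj x) ^ mu))"
    by (intro Bochner_Integration.integral_cong refl) (simp add: mult.commute)
  also have "\<dots> = cnj (integral\<^sup>L (iota mu) (\<lambda>x. poly q x * (1 + z * cnj x) ^ mu))"
    by (rule Bochner_Integration.integral_cnj)
  also have "\<dots> = cnj (poly q z)"
    by (simp add: integral_iota_reproducing[OF assms])
  finally show ?thesis
    using of_nat_add_one_neq_zero[of mu, where 'a = complex] by (simp add: eq_divide_eq mult.commute)
qed

section \<open>The quadratic form of \<open>R\<^sub>\<mu>\<^sup>*(f)\<close>\<close>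

interpretation iota00: pair_sigma_finite "iota 0" "iota 0"
  by (simp add: pair_sigma_finite_def iota0.sigma_finite_measure_axioms)

lemma L2_iota_measurable [measurable_dest]: "L2_iota f \<Longrightarrow> f \<in> borel_measurable borel"
  by (simp add: L2_iota_def)

lemma L2_iota_integrable:
  assumes "L2_iota f"
  shows "integrable (iota 0) f"
proof (rule Bochner_Integration.integrable_bound[where f = "\<lambda>z. 1 + (cmod (f z))\<^sup>2"])
  show "integrable (iota 0) (\<lambda>z. 1 + (cmod (f z))\<^sup>2)"
    using assms by (simp add: L2_iota_def)
  have "cmod (f x) \<le> 1 + (cmod (f x))\<^sup>2" for x
  proof -
    have "0 \<le> (cmod (f x) - 1)\<^sup>2" by simp
    then have "2 * cmod (f x) \<le> 1 + (cmod (f x))\<^sup>2"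
      by (simp add: power2_diff)
    then show ?thesis
      using norm_ge_zero[of "f x"] by linarith
  qed
  then show "AE x in iota 0. norm (f x) \<le> norm (1 + (cmod (f x))\<^sup>2)"
    by simp
qed (use assms L2_iota_measurable in simp)

lemma one_plus_norm_power_sq_le: "((1 + cmod y) ^ mu)\<^sup>2 \<le> 2 ^ mu * weight mu y"
proof -
  have "0 \<le> (cmod y - 1)\<^sup>2" by simp
  then have "(1 + cmod y)\<^sup>2 \<le> 2 * (1 + (cmod y)\<^sup>2)"
    by (simp add: power2_diff power2_sum)
  then have "((1 + cmod y)\<^sup>2) ^ mu \<le> (2 * (1 + (cmod y)\<^sup>2)) ^ mu"
    by (intro power_mono) auto
  moreover have "(2 * (1 + (cmod y)\<^sup>2)) ^ mu = 2 ^ mu * weight mu y"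
    unfolding weight_def by (rule power_mult_distrib)
  moreover have "((1 + cmod y) ^ mu)\<^sup>2 = ((1 + cmod y)\<^sup>2) ^ mu"
    by (simp only: power_mult[symmetric] mult.commute)
  ultimately show ?thesis
    by simp
qed

lemma norm_kernel_product_le:
  fixes q :: "complex poly"
  assumes "degree q \<le> mu"
  shows "cmod (poly q z * (1 + x * cnj z) ^ mu * cnj (poly q x))
      \<le> ((\<Sum>l\<le>mu. cmod (coeff q l))\<^sup>2 * 4 ^ mu) * (weight mu z * weight mu x)"
proof -
  define c where "c = (\<Sum>l\<le>mu. cmod (coeff q l))"
  have c_nonneg: "0 \<le> c"
    unfolding c_def by (simp add: sum_nonneg)
  have kernel: "cmod ((1 + x * cnj z) ^ mu) \<le> (1 + cmod x) ^ mu * (1 + cmod z) ^ mu"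
  proof -
    have "cmod (1 + x * cnj z) \<le> 1 + cmod x * cmod z"
      using norm_triangle_ineq[of 1 "x * cnj z"] by (simp add: norm_mult)
    also have "\<dots> \<le> (1 + cmod x) * (1 + cmod z)"
      by (simp add: algebra_simps)
    finally have "cmod (1 + x * cnj z) \<le> (1 + cmod x) * (1 + cmod z)" .
    then show ?thesis
      by (simp add: norm_power flip: power_mult_distrib) (intro power_mono; simp)
  qed
  have "cmod (poly q z * (1 + x * cnj z) ^ mu * cnj (poly q x))
      = cmod (poly q z) * cmod ((1 + x * cnj z) ^ mu) * cmod (poly q x)"
    by (simp add: norm_mult)
  also have "\<dots> \<le> (c * (1 + cmod z) ^ mu) * ((1 + cmod x) ^ mu * (1 + cmod z) ^ mu) * (c * (1 + cmod x) ^ mu)"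
    using norm_poly_le_sum_coeff[OF assms] kernel c_nonneg
    by (intro mult_mono) (simp_all add: c_def)
  also have "\<dots> = c\<^sup>2 * (((1 + cmod z) ^ mu)\<^sup>2 * ((1 + cmod x) ^ mu)\<^sup>2)"
    by (simp add: power2_eq_square ac_simps)
  also have "\<dots> \<le> c\<^sup>2 * ((2 ^ mu * weight mu z) * (2 ^ mu * weight mu x))"
    by (intro mult_left_mono mult_mono one_plus_norm_power_sq_le) (auto simp: weight_def)
  also have "\<dots> = (c\<^sup>2 * 4 ^ mu) * (weight mu z * weight mu x)"
    by (simp add: ac_simps flip: power_mult_distrib)
  finally show ?thesis
    unfolding c_def .
qed

lemma Rstar_eq_integral_iota0:
  assumes [measurable]: "f \<in> borel_measurable borel" "h \<in> borel_measurable borel"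
  shows "Rstar mu f h x = integral\<^sup>L (iota 0) (\<lambda>z. f z * h z * (1 + x * cnj z) ^ mu / weight mu z)"
  unfolding Rstar_def using of_nat_add_one_neq_zero[of mu, where 'a = complex]
  by (subst integral_iota_eq_iota0) simp_all

lemma integrable_iota0_pair_kernel:
  fixes q :: "complex poly"
  assumes f: "L2_iota f" and q: "degree q \<le> mu"
  shows "integrable (iota 0 \<Otimes>\<^sub>M iota 0)
    (\<lambda>(x, z). f z * poly q z * (1 + x * cnj z) ^ mu / weight mu z * (cnj (poly q x) / weight mu x))"
    (is "integrable _ (\<lambda>(x, z). ?K x z)")
proof -
  note [measurable] = L2_iota_measurable[OF f]
  define C where "C = (\<Sum>l\<le>mu. cmod (coeff q l))\<^sup>2 * 4 ^ mu"
  have bound: "cmod (?K x z) \<le> C * cmod (f z)" for x z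
  proof -
    have "cmod (?K x z) = cmod (f z) * (cmod (poly q z * (1 + x * cnj z) ^ mu * cnj (poly q x))
        / (weight mu z * weight mu x))"
      using weight_pos[of mu z] weight_pos[of mu x] by (simp add: norm_mult norm_divide)
    also have "\<dots> \<le> cmod (f z) * C"
      using norm_kernel_product_le[OF q, of z x] weight_pos[of mu z] weight_pos[of mu x]
      by (intro mult_left_mono) (simp_all add: C_def divide_le_eq)
    finally show ?thesis
      by (simp add: mult.commute)
  qed
  show ?thesis
  proof (rule Bochner_Integration.integrable_bound[where f = "\<lambda>p. C * cmod (f (snd p))"])
    show "integrable (iota 0 \<Otimes>\<^sub>M iota 0) (\<lambda>p. C * cmod (f (snd p)))"
      using L2_iota_integrable[OF f] by (intro iota00.Fubini_integrable) (auto intro!: integrable_norm)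
    show "AE p in iota 0 \<Otimes>\<^sub>M iota 0. norm (case_prod ?K p) \<le> norm (C * cmod (f (snd p)))"
      using bound by (auto simp: C_def abs_mult)
  qed measurable
qed

text \<open>Fubini, then the reproducing property in the inner variable.\<close>
lemma inner_Rstar_poly:
  fixes q :: "complex poly"
  assumes f: "L2_iota f" and q: "degree q \<le> mu"
  shows "inner_H mu (Rstar mu f (poly q)) (poly q)
       = integral\<^sup>L (iota 0) (\<lambda>s. f s * (poly q s * cnj (poly q s)) / weight mu s)"
proof -
  note [measurable] = L2_iota_measurable[OF f]
  define K where "K = (\<lambda>x z. f z * poly q z * (1 + x * cnj z) ^ mu / weight mu z * (cnj (poly q x) / weight mu x))"
  have R: "Rstar mu f (poly q) x = integral\<^sup>L (iota 0) (\<lambda>z. f z * poly q z * (1 + x * cnj z) ^ mu / weight mu z)"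
    for x
    by (rule Rstar_eq_integral_iota0) measurable
  have [measurable]: "Rstar mu f (poly q) \<in> borel_measurable borel"
    unfolding R by (rule iota0.borel_measurable_lebesgue_integral) measurable
  have "inner_H mu (Rstar mu f (poly q)) (poly q)
      = (real mu + 1) * integral\<^sup>L (iota 0) (\<lambda>x. Rstar mu f (poly q) x * cnj (poly q x) / weight mu x)"
    unfolding inner_H_def by (rule integral_iota_eq_iota0) measurable
  also have "integral\<^sup>L (iota 0) (\<lambda>x. Rstar mu f (poly q) x * cnj (poly q x) / weight mu x)
      = integral\<^sup>L (iota 0) (\<lambda>x. integral\<^sup>L (iota 0) (\<lambda>z. K x z))"
  proof (rule Bochner_Integration.integral_cong[OF refl])
    fix x
    have "Rstar mu f (poly q) x * cnj (poly q x) / weight mu x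
        = integral\<^sup>L (iota 0) (\<lambda>z. f z * poly q z * (1 + x * cnj z) ^ mu / weight mu z)
          * (cnj (poly q x) / weight mu x)"
      by (simp add: R)
    also have "\<dots> = integral\<^sup>L (iota 0) (\<lambda>z. K x z)"
      unfolding K_def by (rule integral_mult_left_zero[symmetric])
    finally show "Rstar mu f (poly q) x * cnj (poly q x) / weight mu x = integral\<^sup>L (iota 0) (\<lambda>z. K x z)" .
  qed
  also have "\<dots> = integral\<^sup>L (iota 0) (\<lambda>z. integral\<^sup>L (iota 0) (\<lambda>x. K x z))"
    unfolding K_def by (rule iota00.Fubini_integral[symmetric, OF integrable_iota0_pair_kernel[OF f q]])
  also have "\<dots> = integral\<^sup>L (iota 0) (\<lambda>z. f z * (poly q z * cnj (poly q z)) / weight mu z / (of_nat mu + 1))"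
  proof (rule Bochner_Integration.integral_cong[OF refl])
    fix z
    have "integral\<^sup>L (iota 0) (\<lambda>x. K x z)
        = f z * poly q z / weight mu z * integral\<^sup>L (iota 0) (\<lambda>x. (1 + x * cnj z) ^ mu * cnj (poly q x) / weight mu x)"
      unfolding K_def by (simp add: integral_mult_right_zero[symmetric] ac_simps)
    then show "integral\<^sup>L (iota 0) (\<lambda>x. K x z) = f z * (poly q z * cnj (poly q z)) / weight mu z / (of_nat mu + 1)"
      by (simp add: integral_iota0_reproducing_cnj[OF q])
  qed
  also have "\<dots> = integral\<^sup>L (iota 0) (\<lambda>z. f z * (poly q z * cnj (poly q z)) / weight mu z) / (of_nat mu + 1)"
    by (rule integral_divide_zero)
  finally show ?thesis
    using of_nat_add_one_neq_zero[of mu, where 'a = complex] by simp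
qed

section \<open>Berezin kernel and coherent polynomials\<close>

definition chordal_dist_sq :: "complex \<Rightarrow> complex \<Rightarrow> real" where
  "chordal_dist_sq z s = (cmod (s - z))\<^sup>2 / ((1 + (cmod z)\<^sup>2) * (1 + (cmod s)\<^sup>2))"

lemma chordal_dist_sq_measurable [measurable]: "chordal_dist_sq z \<in> borel_measurable borel"
  unfolding chordal_dist_sq_def by measurable

lemma lagrange_identity_complex:
  "(cmod (1 + cnj z * s))\<^sup>2 + (cmod (s - z))\<^sup>2 = (1 + (cmod z)\<^sup>2) * (1 + (cmod s)\<^sup>2)"
  unfolding cmod_power2 by (simp add: power2_eq_square algebra_simps)

lemma one_minus_chordal_dist_sq:
  "1 - chordal_dist_sq z s = (cmod (1 + cnj z * s))\<^sup>2 / ((1 + (cmod z)\<^sup>2) * (1 + (cmod s)\<^sup>2))"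
proof -
  define B where "B = (1 + (cmod z)\<^sup>2) * (1 + (cmod s)\<^sup>2)"
  have "B > 0"
    unfolding B_def using one_plus_cmod_sq_pos by simp
  then have "1 - chordal_dist_sq z s = (B - (cmod (s - z))\<^sup>2) / B"
    unfolding chordal_dist_sq_def B_def[symmetric] by (simp add: diff_divide_distrib)
  also have "B - (cmod (s - z))\<^sup>2 = (cmod (1 + cnj z * s))\<^sup>2"
    unfolding B_def lagrange_identity_complex[symmetric] by simp
  finally show ?thesis
    unfolding B_def .
qed

lemma chordal_dist_sq_nonneg: "0 \<le> chordal_dist_sq z s"
  unfolding chordal_dist_sq_def using one_plus_cmod_sq_pos by simp

lemma chordal_dist_sq_le_one: "chordal_dist_sq z s \<le> 1"
proof -
  have "0 \<le> 1 - chordal_dist_sq z s"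
    unfolding one_minus_chordal_dist_sq using one_plus_cmod_sq_pos[of z] one_plus_cmod_sq_pos[of s] by simp
  then show ?thesis by simp
qed

lemma berezin_kernel_eq:
  "(cmod (1 + z * cnj s)) ^ (2 * tau) / ((1 + (cmod z)\<^sup>2) ^ tau * (1 + (cmod s)\<^sup>2) ^ tau)
     = (1 - chordal_dist_sq z s) ^ tau"
proof -
  have "cmod (1 + z * cnj s) = cmod (cnj (1 + z * cnj s))"
    by (rule complex_mod_cnj[symmetric])
  also have "cnj (1 + z * cnj s) = 1 + cnj z * s"
    by simp
  finally have "cmod (1 + z * cnj s) = cmod (1 + cnj z * s)" .
  then show ?thesis
    by (simp add: one_minus_chordal_dist_sq power_mult power_divide power_mult_distrib)
qed

lemma E_op_eq_integral_Bernstein: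
  assumes f: "L2_iota f" and "k \<le> mu"
  shows "E_op mu k f z = integral\<^sup>L (iota 0) (\<lambda>s. f s * Bernstein mu k (chordal_dist_sq z s))"
proof -
  let ?K = "\<lambda>tau s. complex_of_real ((1 - chordal_dist_sq z s) ^ tau)"
  define c where "c l = of_nat (mu choose k) * ((-1) ^ (k - l) * of_nat (k choose l) :: complex)" for l
  have berezin: "berezin tau f z = integral\<^sup>L (iota 0) (\<lambda>s. f s * ?K tau s)" for tau
    unfolding berezin_def berezin_kernel_eq by (simp add: mult.commute)
  have K_bound: "cmod (?K tau s) \<le> 1" for tau s
  proof -
    have "0 \<le> 1 - chordal_dist_sq z s" "1 - chordal_dist_sq z s \<le> 1"
      using chordal_dist_sq_nonneg chordal_dist_sq_le_one by simp_all
    then have "\<bar>(1 - chordal_dist_sq z s) ^ tau\<bar> \<le> 1"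
      by (simp add: power_le_one)
    then show ?thesis
      by (simp only: norm_of_real)
  qed
  have integrable: "integrable (iota 0) (\<lambda>s. f s * ?K tau s)" for tau
    by (rule integrable_mult_bounded[OF L2_iota_integrable[OF f] _ K_bound]) measurable
  have "E_op mu k f z = (\<Sum>l\<in>{0..k}. integral\<^sup>L (iota 0) (\<lambda>s. c l * (f s * ?K (mu - l) s)))"
    unfolding E_op_def berezin sum_distrib_left c_def by (simp add: mult.assoc)
  also have "\<dots> = integral\<^sup>L (iota 0) (\<lambda>s. \<Sum>l\<in>{0..k}. c l * (f s * ?K (mu - l) s))"
    by (rule Bochner_Integration.integral_sum[symmetric]) (use integrable in auto)
  also have "\<dots> = integral\<^sup>L (iota 0) (\<lambda>s. f s * Bernstein mu k (chordal_dist_sq z s))"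
  proof (rule Bochner_Integration.integral_cong[OF refl])
    fix s
    have "complex_of_real (Bernstein mu k (chordal_dist_sq z s)) = (\<Sum>l\<in>{0..k}. c l * ?K (mu - l) s)"
      unfolding Bernstein_eq_alternating_sum[OF \<open>k \<le> mu\<close>] c_def
      by (simp add: atLeast0AtMost sum_distrib_left mult.assoc)
    then show "(\<Sum>l\<in>{0..k}. c l * (f s * ?K (mu - l) s)) = f s * Bernstein mu k (chordal_dist_sq z s)"
      by (simp add: sum_distrib_left ac_simps)
  qed
  finally show ?thesis .
qed

definition coherent_poly :: "nat \<Rightarrow> complex \<Rightarrow> nat \<Rightarrow> complex poly" where
  "coherent_poly mu z j = smult (complex_of_real (sqrt (real (mu choose j) / weight mu z)))
     ([:- z, 1:] ^ j * [:1, cnj z:] ^ (mu - j))"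

lemma degree_coherent_poly:
  assumes "j \<le> mu"
  shows "degree (coherent_poly mu z j) \<le> mu"
proof -
  have "degree ([:- z, 1:] ^ j * [:1, cnj z:] ^ (mu - j)) \<le> j + (mu - j)"
    by (intro order.trans[OF degree_mult_le] add_mono order.trans[OF degree_power_le])
      (simp_all add: degree_pCons_le)
  with assms have "degree ([:- z, 1:] ^ j * [:1, cnj z:] ^ (mu - j)) \<le> mu"
    by simp
  then show ?thesis
    unfolding coherent_poly_def by (rule order.trans[OF degree_smult_le])
qed

lemma norm_coherent_poly_sq:
  assumes "j \<le> mu"
  shows "(cmod (poly (coherent_poly mu z j) s))\<^sup>2 / weight mu s = Bernstein mu j (chordal_dist_sq z s)"
proof -
  define B where "B = (1 + (cmod z)\<^sup>2) * (1 + (cmod s)\<^sup>2)"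
  have "B > 0"
    unfolding B_def using one_plus_cmod_sq_pos by simp
  have "weight mu z * weight mu s = B ^ mu"
    by (simp add: weight_def B_def power_mult_distrib)
  also have "\<dots> = B ^ j * B ^ (mu - j)"
    using assms by (simp flip: power_add)
  finally have weights: "weight mu s * weight mu z = B ^ j * B ^ (mu - j)"
    by (simp only: mult.commute)
  have "(cmod (poly (coherent_poly mu z j) s))\<^sup>2
      = real (mu choose j) / weight mu z * ((cmod (s - z))\<^sup>2 ^ j * (cmod (1 + cnj z * s))\<^sup>2 ^ (mu - j))"
    using weight_pos[of mu z]
    by (simp add: coherent_poly_def norm_mult norm_power power_mult_distrib algebra_simps
        flip: power_mult)
  then have "(cmod (poly (coherent_poly mu z j) s))\<^sup>2 / weight mu s
      = real (mu choose j) * (((cmod (s - z))\<^sup>2 / B) ^ j * ((cmod (1 + cnj z * s))\<^sup>2 / B) ^ (mu - j))"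
    using weight_pos[of mu s] \<open>B > 0\<close> by (simp add: weights power_divide field_simps)
  then show ?thesis
    unfolding Bernstein_def one_minus_chordal_dist_sq by (simp add: chordal_dist_sq_def B_def)
qed

lemma inner_Rstar_coherent_poly:
  assumes "L2_iota f" "j \<le> mu"
  shows "inner_H mu (Rstar mu f (poly (coherent_poly mu z j))) (poly (coherent_poly mu z j))
       = integral\<^sup>L (iota 0) (\<lambda>s. f s * Bernstein mu j (chordal_dist_sq z s))"
  unfolding inner_Rstar_poly[OF assms(1) degree_coherent_poly[OF assms(2)]]
proof (rule Bochner_Integration.integral_cong[OF refl])
  fix s
  show "f s * (poly (coherent_poly mu z j) s * cnj (poly (coherent_poly mu z j) s)) / weight mu s
      = f s * Bernstein mu j (chordal_dist_sq z s)"
    by (simp flip: norm_coherent_poly_sq[OF assms(2)] complex_norm_square)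
qed

section \<open>The trace of \<open>R\<^sub>\<mu>\<^sup>*(f)\<close>\<close>

lemma integrable_iota_mult_monomial:
  assumes f: "L2_iota f" and "i \<le> mu" "j \<le> mu"
  shows "integrable (iota mu) (\<lambda>z. f z * (z ^ j * cnj z ^ i))"
proof -
  note [measurable] = L2_iota_measurable[OF f]
  have "cmod (z ^ j * cnj z ^ i / weight mu z) \<le> 1" for z
  proof -
    have "cmod (z ^ j * cnj z ^ i) \<le> weight mu z"
      using power_le_one_plus_sq_power[of "cmod z" "j + i" mu] assms(2,3)
      by (simp add: norm_mult norm_power power_add weight_def)
    then show ?thesis
      using weight_pos[of mu z] by (simp add: norm_divide divide_le_eq)
  qed
  then have "integrable (iota 0) (\<lambda>z. f z * (z ^ j * cnj z ^ i / weight mu z))"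
    by (intro integrable_mult_bounded[OF L2_iota_integrable[OF f]]) measurable
  then show ?thesis
    using integrable_iota_iff_iota0[of "\<lambda>z. f z * (z ^ j * cnj z ^ i)" mu] by simp
qed

lemma Rstar_monomial:
  assumes f: "L2_iota f" and j: "j \<le> mu"
  shows "Rstar mu f (\<lambda>x. x ^ j) = poly (\<Sum>i\<le>mu. monom (of_nat (mu choose i) / (of_nat mu + 1)
           * integral\<^sup>L (iota mu) (\<lambda>z. f z * (z ^ j * cnj z ^ i))) i)"
proof
  fix x :: complex
  have "f z * z ^ j * (1 + x * cnj z) ^ mu = (\<Sum>i\<le>mu. (of_nat (mu choose i) * x ^ i) * (f z * (z ^ j * cnj z ^ i)))"
    for z
    unfolding one_plus_power_eq_sum sum_distrib_left by (intro sum.cong refl) (simp add: power_mult_distrib ac_simps)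
  then have "integral\<^sup>L (iota mu) (\<lambda>z. f z * z ^ j * (1 + x * cnj z) ^ mu)
      = integral\<^sup>L (iota mu) (\<lambda>z. \<Sum>i\<le>mu. (of_nat (mu choose i) * x ^ i) * (f z * (z ^ j * cnj z ^ i)))"
    by (simp only:)
  also have "\<dots> = (\<Sum>i\<le>mu. integral\<^sup>L (iota mu) (\<lambda>z. (of_nat (mu choose i) * x ^ i) * (f z * (z ^ j * cnj z ^ i))))"
    by (rule Bochner_Integration.integral_sum) (use integrable_iota_mult_monomial[OF f _ j] in auto)
  also have "\<dots> = (\<Sum>i\<le>mu. (of_nat (mu choose i) * x ^ i) * integral\<^sup>L (iota mu) (\<lambda>z. f z * (z ^ j * cnj z ^ i)))"
    by (intro sum.cong refl integral_mult_right_zero)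
  finally show "Rstar mu f (\<lambda>x. x ^ j) x = poly (\<Sum>i\<le>mu. monom (of_nat (mu choose i) / (of_nat mu + 1)
           * integral\<^sup>L (iota mu) (\<lambda>z. f z * (z ^ j * cnj z ^ i))) i) x"
    unfolding Rstar_def by (simp add: poly_sum poly_monom sum_distrib_left ac_simps)
qed

lemma as_poly_poly: "as_poly (poly p) = p"
  unfolding as_poly_def by (rule the_equality) (auto simp: poly_eq_poly_eq_iff)

lemma Bernstein_chordal_dist_sq_zero:
  assumes "j \<le> mu"
  shows "Bernstein mu j (chordal_dist_sq 0 s) = real (mu choose j) * (cmod s) ^ (2 * j) / weight mu s"
proof -
  have "chordal_dist_sq 0 s = (cmod s)\<^sup>2 / (1 + (cmod s)\<^sup>2)" "1 - chordal_dist_sq 0 s = 1 / (1 + (cmod s)\<^sup>2)"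
    using one_minus_chordal_dist_sq[of 0 s] by (simp_all add: chordal_dist_sq_def)
  moreover have "(1 + (cmod s)\<^sup>2) ^ j * (1 + (cmod s)\<^sup>2) ^ (mu - j) = weight mu s"
    using assms by (simp add: weight_def flip: power_add)
  ultimately show ?thesis
    by (simp add: Bernstein_def power_divide power_mult)
qed

lemma coeff_Rstar_monomial:
  assumes f: "L2_iota f" and j: "j \<le> mu"
  shows "coeff (as_poly (Rstar mu f (\<lambda>x. x ^ j))) j
       = integral\<^sup>L (iota 0) (\<lambda>s. f s * Bernstein mu j (chordal_dist_sq 0 s))"
proof -
  note [measurable] = L2_iota_measurable[OF f]
  have "coeff (as_poly (Rstar mu f (\<lambda>x. x ^ j))) j
      = of_nat (mu choose j) / (of_nat mu + 1) * integral\<^sup>L (iota mu) (\<lambda>z. f z * (z ^ j * cnj z ^ j))"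
    using j by (simp add: Rstar_monomial[OF f j] as_poly_poly coeff_sum coeff_monom)
  also have "integral\<^sup>L (iota mu) (\<lambda>z. f z * (z ^ j * cnj z ^ j))
      = (real mu + 1) * integral\<^sup>L (iota 0) (\<lambda>z. f z * (z ^ j * cnj z ^ j) / weight mu z)"
    by (rule integral_iota_eq_iota0) measurable
  also have "integral\<^sup>L (iota 0) (\<lambda>z. f z * (z ^ j * cnj z ^ j) / weight mu z)
      = integral\<^sup>L (iota 0) (\<lambda>s. f s * Bernstein mu j (chordal_dist_sq 0 s)) / of_nat (mu choose j)"
    using j by (simp add: Bernstein_chordal_dist_sq_zero monomial_cnj_monomial_eq field_simps
        flip: integral_divide_zero)
  finally show ?thesis
    using j of_nat_add_one_neq_zero[of mu, where 'a = complex] by simp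
qed

lemma trace_Rstar:
  assumes f: "L2_iota f"
  shows "trace_H mu (Rstar mu f) = integral\<^sup>L (iota 0) f"
proof -
  have "trace_H mu (Rstar mu f) = (\<Sum>j\<le>mu. integral\<^sup>L (iota 0) (\<lambda>s. f s * Bernstein mu j (chordal_dist_sq 0 s)))"
    unfolding trace_H_def by (intro sum.cong refl) (simp add: coeff_Rstar_monomial[OF f])
  also have "\<dots> = integral\<^sup>L (iota 0) f"
    by (intro sum_integral_mult_Bernstein L2_iota_integrable[OF f] chordal_dist_sq_nonneg
        chordal_dist_sq_le_one) measurable
  finally show ?thesis .
qed

theorem mainTheorem4:
  fixes mu k :: nat and f :: "complex \<Rightarrow> complex"
  assumes "k \<le> mu"
    and "L2_iota f"
    and "psd_H mu (Rstar mu f)"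
  shows "\<forall>z. 0 \<le> E_op mu k f z \<and> E_op mu k f z \<le> trace_H mu (Rstar mu f)"
proof
  fix z
  define v where "v j = integral\<^sup>L (iota 0) (\<lambda>s. f s * Bernstein mu j (chordal_dist_sq z s))" for j
  have v_nonneg: "0 \<le> v j" if "j \<le> mu" for j
  proof -
    have "poly (coherent_poly mu z j) \<in> Hmu mu"
      unfolding Hmu_def using degree_coherent_poly[OF that] by blast
    with assms(3) show ?thesis
      unfolding v_def psd_H_def inner_Rstar_coherent_poly[OF assms(2) that, symmetric] by blast
  qed
  have "E_op mu k f z = v k"
    unfolding v_def by (rule E_op_eq_integral_Bernstein[OF assms(2,1)])
  moreover have "trace_H mu (Rstar mu f) = (\<Sum>j\<le>mu. v j)"
    unfolding v_def trace_Rstar[OF assms(2)]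
    by (intro sum_integral_mult_Bernstein[symmetric] L2_iota_integrable[OF assms(2)]
        chordal_dist_sq_nonneg chordal_dist_sq_le_one) measurable
  moreover have "v k \<le> (\<Sum>j\<le>mu. v j)"
    using assms(1) v_nonneg by (intro member_le_sum) auto
  ultimately show "0 \<le> E_op mu k f z \<and> E_op mu k f z \<le> trace_H mu (Rstar mu f)"
    using v_nonneg[OF assms(1)] by simp
qed

end
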